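(* There is an $\mathrm{FP}$-formula $\varphi_{1}(x,y,y')$ over the vocabulary $\{E\}$ such that for all prime permutation graphs $G=(V,E)$ and all $w,v,v'\in V$: $G\models\varphi_{1}[w,v,v']$ iff $v\vartriangleleft_1^w v'$; and for any such formula, $\varphi(x,y,y'):=\varphi_{1}(x,y,y')\lor y=y'$ defines orders on the class of prime permutation graphs, i.e., for every prime permutation graph $G$ there is $w\in V$ such that $\{(v,v')\mid G\models\varphi[w,v,v']\}$ is a linear order on $V$.
   Context: Graphs are finite, simple, undirected, with nonempty vertex set. A module of $G$ is a nonempty $M\subseteq V$ such that every vertex outside $M$ is adjacent to all or none of $M$; $G$ is prime if its only modules are $V$ and the singletons. A realizer of $G$ is a pair $(<_1,<_2)$ of strict linear orders on $V$ such that distinct $u,v$ are adjacent iff they appear in different orders in $<_1$ and $<_2$; $G$ is a permutation graph if it has a realizer. For a pair of binary relations $(\lhd_1,\lhd_2)$ on $V$: its transitive closure is $(\lhd_1^T,\lhd_2^T)$ (componentwise); its closure under $E$ is $(\lhd_1^E,\lhd_2^E)$ where, for $i\in[2]$, $\lhd_i^E=\lhd_i\cup\{(v,u)\mid u\lhd_{3-i}v,\ \{u,v\}\in E\}\cup\{(u,v)\mid u\lhd_{3-i}v,\ \{u,v\}\notin E\}$. For $w\in V$ define $\lhd_{1,0}^w=\{(w,v)\mid v\ne w\}$, $\lhd_{2,0}^w=\emptyset$, and for $k\ge0$, $(\lhd_{1,k+1}^w,\lhd_{2,k+1}^w)=((\lhd_{1,k}^w,\lhd_{2,k}^w)^E)^T$;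 $\lhd_i^w$ is the stabilized value. $\mathrm{FP}$ is (inflationary) fixed-point logic, i.e., first-order logic extended with inflationary fixed-point operators. *)

theory Defs
  imports Main
begin

definition graph :: "'a set \<Rightarrow> 'a set set \<Rightarrow> bool" where
  "graph V E \<longleftrightarrow> finite V \<and> V \<noteq> {} \<and>
     E \<subseteq> {{u, v} | u v. u \<in> V \<and> v \<in> V \<and> u \<noteq> v}"

definition is_module :: "'a set \<Rightarrow> 'a set set \<Rightarrow> 'a set \<Rightarrow> bool" where
  "is_module V E M \<longleftrightarrow> M \<noteq> {} \<and> M \<subseteq> V \<and>
     (\<forall>x \<in> V - M. (\<forall>m \<in> M. {x, m} \<in> E) \<or> (\<forall>m \<in> M. {x, m} \<notin> E))"

definition prime_graph :: "'a set \<Rightarrow> 'a set set \<Rightarrow> bool" where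
  "prime_graph V E \<longleftrightarrow>
     (\<forall>M. is_module V E M \<longrightarrow> M = V \<or> (\<exists>x. M = {x}))"

definition strict_lin_order :: "'a set \<Rightarrow> 'a rel \<Rightarrow> bool" where
  "strict_lin_order V r \<longleftrightarrow> r \<subseteq> V \<times> V \<and> trans r \<and> irrefl r \<and> total_on V r"

definition realizer :: "'a set \<Rightarrow> 'a set set \<Rightarrow> 'a rel \<Rightarrow> 'a rel \<Rightarrow> bool" where
  "realizer V E r1 r2 \<longleftrightarrow> strict_lin_order V r1 \<and> strict_lin_order V r2 \<and>
     (\<forall>u \<in> V. \<forall>v \<in> V. u \<noteq> v \<longrightarrow>
        ({u, v} \<in> E \<longleftrightarrow> ((u, v) \<in> r1 \<longleftrightarrow> (v, u) \<in> r2)))"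

definition permutation_graph :: "'a set \<Rightarrow> 'a set set \<Rightarrow> bool" where
  "permutation_graph V E \<longleftrightarrow> (\<exists>r1 r2. realizer V E r1 r2)"

definition closE :: "'a set set \<Rightarrow> 'a rel \<times> 'a rel \<Rightarrow> 'a rel \<times> 'a rel" where
  "closE E p = (let R1 = fst p; R2 = snd p in
     (R1 \<union> {(v, u) | u v. (u, v) \<in> R2 \<and> {u, v} \<in> E}
         \<union> {(u, v) | u v. (u, v) \<in> R2 \<and> {u, v} \<notin> E},
      R2 \<union> {(v, u) | u v. (u, v) \<in> R1 \<and> {u, v} \<in> E}
         \<union> {(u, v) | u v. (u, v) \<in> R1 \<and> {u, v} \<notin> E}))"

definition closT :: "'a rel \<times> 'a rel \<Rightarrow> 'a rel \<times> 'a rel" where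
  "closT p = ((fst p)\<^sup>+, (snd p)\<^sup>+)"

fun lhd_stage :: "'a set \<Rightarrow> 'a set set \<Rightarrow> 'a \<Rightarrow> nat \<Rightarrow> 'a rel \<times> 'a rel" where
  "lhd_stage V E w 0 = ({(w, v) | v. v \<in> V \<and> v \<noteq> w}, {})"
| "lhd_stage V E w (Suc k) = closT (closE E (lhd_stage V E w k))"

text \<open>The sequence of stages is increasing, so its stabilized value is its union.\<close>
definition lhd1 :: "'a set \<Rightarrow> 'a set set \<Rightarrow> 'a \<Rightarrow> 'a rel" where
  "lhd1 V E w = (\<Union>k. fst (lhd_stage V E w k))"

definition lhd2 :: "'a set \<Rightarrow> 'a set set \<Rightarrow> 'a \<Rightarrow> 'a rel" where
  "lhd2 V E w = (\<Union>k. snd (lhd_stage V E w k))"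

text \<open>First-order variables and relation variables are natural numbers.
  IFP R xs phi ts is the formula [ifp_{R, xs} phi](ts).\<close>
datatype fp =
    FEq nat nat
  | FEdge nat nat
  | FRel nat "nat list"
  | FNeg fp
  | FOr fp fp
  | FEx nat fp
  | FIFP nat "nat list" fp "nat list"

fun upds :: "('v \<Rightarrow> 'a) \<Rightarrow> 'v list \<Rightarrow> 'a list \<Rightarrow> ('v \<Rightarrow> 'a)" where
  "upds \<alpha> [] as = \<alpha>"
| "upds \<alpha> (x # xs) [] = \<alpha>"
| "upds \<alpha> (x # xs) (a # as) = (upds \<alpha> xs as)(x := a)"

fun sat :: "'a set \<Rightarrow> 'a set set \<Rightarrow> (nat \<Rightarrow> 'a) \<Rightarrow> (nat \<Rightarrow> 'a list set) \<Rightarrow> fp \<Rightarrow> bool" where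
  "sat V E \<alpha> \<rho> (FEq x y) = (\<alpha> x = \<alpha> y)"
| "sat V E \<alpha> \<rho> (FEdge x y) = ({\<alpha> x, \<alpha> y} \<in> E)"
| "sat V E \<alpha> \<rho> (FRel R ts) = (map \<alpha> ts \<in> \<rho> R)"
| "sat V E \<alpha> \<rho> (FNeg \<phi>) = (\<not> sat V E \<alpha> \<rho> \<phi>)"
| "sat V E \<alpha> \<rho> (FOr \<phi> \<psi>) = (sat V E \<alpha> \<rho> \<phi> \<or> sat V E \<alpha> \<rho> \<psi>)"
| "sat V E \<alpha> \<rho> (FEx x \<phi>) = (\<exists>a \<in> V. sat V E (\<alpha>(x := a)) \<rho> \<phi>)"
| "sat V E \<alpha> \<rho> (FIFP R xs \<phi> ts) =
     (map \<alpha> ts \<in> (\<Union>n. ((\<lambda>S. S \<union> {as. length as = length xs \<and> set as \<subseteq> V \<and>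
                                 sat V E (upds \<alpha> xs as) (\<rho>(R := S)) \<phi>}) ^^ n) {}))"

end

theory Submission
  imports Defs
begin

(* The relations \<lhd>\<^sub>1\<^sup>w and \<lhd>\<^sub>2\<^sup>w are defined simultaneously by a single inflationary fixed point
   of a ternary relation R(t, x, y): the slice t = w carries \<lhd>\<^sub>1\<^sup>w, every slice t \<noteq> w carries
   \<lhd>\<^sub>2\<^sup>w, and the rules of the fixed point are transitivity within a slice, the initial pairs
   (w, v), and closure under E between the two kinds of slices.

   For the order, take a realizer (<\<^sub>1, <\<^sub>2) and let w be the <\<^sub>1-least vertex. The realizer is a
   transitive pair closed under E containing the initial pairs, so it contains
   (\<lhd>\<^sub>1\<^sup>w, \<lhd>\<^sub>2\<^sup>w); hence \<lhd>\<^sub>1\<^sup>w is irreflexive. Totality holds in every prime graph: a vertex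
   comparable to two \<lhd>\<^sub>1\<^sup>w-incomparable vertices is adjacent to both or to neither of them, so the
   connected components of the incomparability graph are modules, and none of them can be
   nontrivial because w is comparable to every other vertex. *)

section \<open>Closure properties of lhd1 and lhd2\<close>

lemma mono_lhd_stage:
  "mono (\<lambda>k. fst (lhd_stage V E w k))" "mono (\<lambda>k. snd (lhd_stage V E w k))"
  by (auto simp: mono_iff_le_Suc closT_def closE_def Let_def)

lemma trans_lhd_stage:
  "trans (fst (lhd_stage V E w k))" "trans (snd (lhd_stage V E w k))"
  by (cases k; auto simp: trans_def closT_def)+

lemma trans_UN_mono:
  fixes R :: "nat \<Rightarrow> 'a rel"
  assumes "mono R" and "\<And>k. trans (R k)"
  shows "trans (\<Union>k. R k)"
proof (rule transI)
  fix x y z assume "(x, y) \<in> (\<Union>k. R k)" "(y, z) \<in> (\<Union>k. R k)"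
  then obtain i j where "(x, y) \<in> R i" "(y, z) \<in> R j" by blast
  then have "(x, y) \<in> R (max i j)" "(y, z) \<in> R (max i j)"
    using monoD[OF assms(1)] by (meson max.cobounded1 max.cobounded2 subsetD)+
  then show "(x, z) \<in> (\<Union>k. R k)" using assms(2) by (blast dest: transD)
qed

lemma trans_lhd1: "trans (lhd1 V E w)"
  unfolding lhd1_def by (rule trans_UN_mono[OF mono_lhd_stage(1) trans_lhd_stage(1)])

lemma trans_lhd2: "trans (lhd2 V E w)"
  unfolding lhd2_def by (rule trans_UN_mono[OF mono_lhd_stage(2) trans_lhd_stage(2)])

lemma lhd1_initial: "v \<in> V \<Longrightarrow> v \<noteq> w \<Longrightarrow> (w, v) \<in> lhd1 V E w"
  unfolding lhd1_def by (rule UN_I[of 0]) auto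

definition closed_under_E :: "'a set set \<Rightarrow> 'a rel \<Rightarrow> 'a rel \<Rightarrow> bool" where
  "closed_under_E E R1 R2 \<longleftrightarrow> closE E (R1, R2) = (R1, R2)"

lemma closed_under_E_iff:
  "closed_under_E E R1 R2 \<longleftrightarrow>
     (\<forall>u v. (u, v) \<in> R2 \<longrightarrow> ({u, v} \<in> E \<longrightarrow> (v, u) \<in> R1) \<and> ({u, v} \<notin> E \<longrightarrow> (u, v) \<in> R1)) \<and>
     (\<forall>u v. (u, v) \<in> R1 \<longrightarrow> ({u, v} \<in> E \<longrightarrow> (v, u) \<in> R2) \<and> ({u, v} \<notin> E \<longrightarrow> (u, v) \<in> R2))"
  unfolding closed_under_E_def closE_def by auto

lemma closed_under_E_sym: "closed_under_E E R1 R2 \<longleftrightarrow> closed_under_E E R2 R1"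
  unfolding closed_under_E_iff by blast

lemma closed_under_ED:
  assumes "closed_under_E E R1 R2" and "(u, v) \<in> R1"
  shows "{u, v} \<in> E \<Longrightarrow> (v, u) \<in> R2" and "{u, v} \<notin> E \<Longrightarrow> (u, v) \<in> R2"
  using assms unfolding closed_under_E_iff by blast+

lemma closed_under_E_lhd: "closed_under_E E (lhd1 V E w) (lhd2 V E w)"
proof -
  have step: "fst (closE E (lhd_stage V E w k)) \<subseteq> lhd1 V E w"
       "snd (closE E (lhd_stage V E w k)) \<subseteq> lhd2 V E w" for k
    unfolding lhd1_def lhd2_def
    by (auto intro!: UN_I[of "Suc k"] simp: closT_def)
  show ?thesis
    unfolding closed_under_E_iff
  proof (intro allI impI conjI)
    fix u v
    assume "(u, v) \<in> lhd2 V E w"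
    then obtain k where "(u, v) \<in> snd (lhd_stage V E w k)" unfolding lhd2_def by blast
    then show "{u, v} \<in> E \<Longrightarrow> (v, u) \<in> lhd1 V E w" "{u, v} \<notin> E \<Longrightarrow> (u, v) \<in> lhd1 V E w"
      using step(1)[of k] unfolding closE_def Let_def by auto
  next
    fix u v
    assume "(u, v) \<in> lhd1 V E w"
    then obtain k where "(u, v) \<in> fst (lhd_stage V E w k)" unfolding lhd1_def by blast
    then show "{u, v} \<in> E \<Longrightarrow> (v, u) \<in> lhd2 V E w" "{u, v} \<notin> E \<Longrightarrow> (u, v) \<in> lhd2 V E w"
      using step(2)[of k] unfolding closE_def Let_def by auto
  qed
qed

lemma closE_mono:
  "fst p \<subseteq> fst q \<Longrightarrow> snd p \<subseteq> snd q \<Longrightarrow>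
     fst (closE E p) \<subseteq> fst (closE E q) \<and> snd (closE E p) \<subseteq> snd (closE E q)"
  unfolding closE_def Let_def by auto

lemma lhd_least:
  assumes initial: "\<And>v. v \<in> V \<Longrightarrow> v \<noteq> w \<Longrightarrow> (w, v) \<in> R1"
    and "trans R1" "trans R2" and closed: "closed_under_E E R1 R2"
  shows "lhd1 V E w \<subseteq> R1 \<and> lhd2 V E w \<subseteq> R2"
proof -
  have "fst (lhd_stage V E w k) \<subseteq> R1 \<and> snd (lhd_stage V E w k) \<subseteq> R2" for k
  proof (induction k)
    case 0
    then show ?case using initial by auto
  next
    case (Suc k)
    have "fst (closE E (lhd_stage V E w k)) \<subseteq> fst (closE E (R1, R2)) \<and>
          snd (closE E (lhd_stage V E w k)) \<subseteq> snd (closE E (R1, R2))"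
      using Suc.IH by (intro closE_mono) simp_all
    then have "fst (closE E (lhd_stage V E w k)) \<subseteq> R1 \<and> snd (closE E (lhd_stage V E w k)) \<subseteq> R2"
      using closed unfolding closed_under_E_def by (simp only: fst_conv snd_conv)
    then show ?case
      using \<open>trans R1\<close> \<open>trans R2\<close> trancl_mono_subset[of _ R1] trancl_mono_subset[of _ R2]
      by (simp add: closT_def)
  qed
  then show ?thesis unfolding lhd1_def lhd2_def by (simp add: UN_subset_iff)
qed

section \<open>Totality on prime graphs\<close>

definition lhd1_comparable :: "'a set \<Rightarrow> 'a set set \<Rightarrow> 'a \<Rightarrow> 'a \<Rightarrow> 'a \<Rightarrow> bool" where
  "lhd1_comparable V E w a b \<longleftrightarrow> (a, b) \<in> lhd1 V E w \<or> (b, a) \<in> lhd1 V E w"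

lemma lhd1_comparable_if_lhd2:
  assumes "(a, b) \<in> lhd2 V E w"
  shows "lhd1_comparable V E w a b"
proof -
  note closed = closed_under_ED[OF closed_under_E_sym[THEN iffD1, OF closed_under_E_lhd] assms]
  show ?thesis
    unfolding lhd1_comparable_def by (cases "{a, b} \<in> E") (simp_all add: closed)
qed

lemma lhd1_comparable_sym: "lhd1_comparable V E w a b \<longleftrightarrow> lhd1_comparable V E w b a"
  unfolding lhd1_comparable_def by blast

lemma lhd1_comparable_if_adjacency_differs:
  assumes "lhd1_comparable V E w z a" "lhd1_comparable V E w z b"
    and "{z, a} \<in> E" "{z, b} \<notin> E"
  shows "lhd1_comparable V E w a b"
proof -
  note closed = closed_under_ED[OF closed_under_E_lhd]
  note tr1 = transD[OF trans_lhd1[of V E w]] and tr2 = transD[OF trans_lhd2[of V E w]]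
  have ea: "{a, z} \<in> E" and nb: "{b, z} \<notin> E" using assms(3,4) by (simp_all add: insert_commute)
  from assms(1,2) consider
      "(z, a) \<in> lhd1 V E w" "(z, b) \<in> lhd1 V E w"
    | "(a, z) \<in> lhd1 V E w" "(b, z) \<in> lhd1 V E w"
    | "(a, z) \<in> lhd1 V E w" "(z, b) \<in> lhd1 V E w"
    | "(z, a) \<in> lhd1 V E w" "(b, z) \<in> lhd1 V E w"
    unfolding lhd1_comparable_def by blast
  then show ?thesis
  proof cases
    case 1
    have "(a, b) \<in> lhd2 V E w" by (rule tr2[OF closed(1)[OF 1(1) assms(3)] closed(2)[OF 1(2) assms(4)]])
    then show ?thesis by (rule lhd1_comparable_if_lhd2)
  next
    case 2
    have "(b, a) \<in> lhd2 V E w" by (rule tr2[OF closed(2)[OF 2(2) nb] closed(1)[OF 2(1) ea]])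
    then show ?thesis by (subst lhd1_comparable_sym) (rule lhd1_comparable_if_lhd2)
  next
    case 3
    then show ?thesis using tr1[of a z b] unfolding lhd1_comparable_def by simp
  next
    case 4
    then show ?thesis using tr1[of b z a] unfolding lhd1_comparable_def by simp
  qed
qed

definition lhd1_incomparability :: "'a set \<Rightarrow> 'a set set \<Rightarrow> 'a \<Rightarrow> 'a rel" where
  "lhd1_incomparability V E w =
     {(a, b). a \<in> V \<and> b \<in> V \<and> a \<noteq> b \<and> \<not> lhd1_comparable V E w a b}"

lemma is_module_lhd1_incomparability_component:
  assumes "a \<in> V"
  shows "is_module V E ((lhd1_incomparability V E w)\<^sup>* `` {a})"
proof -
  let ?U = "lhd1_incomparability V E w"
  let ?K = "?U\<^sup>* `` {a}"
  have K_subset: "?K \<subseteq> V"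
  proof
    fix m assume "m \<in> ?K"
    then have "(a, m) \<in> ?U\<^sup>*" by simp
    then show "m \<in> V"
      by (cases rule: rtranclE) (use \<open>a \<in> V\<close> in \<open>auto simp: lhd1_incomparability_def\<close>)
  qed
  show ?thesis
    unfolding is_module_def
  proof (intro conjI ballI)
    show "?K \<noteq> {}" "?K \<subseteq> V" using K_subset by auto
    fix x assume x: "x \<in> V - ?K"
    have comparable: "lhd1_comparable V E w x m" if "m \<in> ?K" for m
    proof (rule ccontr)
      assume "\<not> lhd1_comparable V E w x m"
      then have "(m, x) \<in> ?U"
        using x that K_subset unfolding lhd1_incomparability_def lhd1_comparable_def by auto
      with that have "x \<in> ?K" by (auto intro: rtrancl_into_rtrancl)
      with x show False by blast
    qed
    have "{x, m} \<in> E \<longleftrightarrow> {x, a} \<in> E" if "m \<in> ?K" for m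
    proof -
      from that have "(a, m) \<in> ?U\<^sup>*" by simp
      then show ?thesis
      proof (induction rule: rtrancl_induct)
        case (step y m)
        then have "y \<in> ?K" "m \<in> ?K" by (auto intro: rtrancl_into_rtrancl)
        moreover have "\<not> lhd1_comparable V E w y m" "\<not> lhd1_comparable V E w m y"
          using step.hyps(2) unfolding lhd1_incomparability_def lhd1_comparable_def by auto
        ultimately have "{x, y} \<in> E \<longleftrightarrow> {x, m} \<in> E"
          using comparable lhd1_comparable_if_adjacency_differs[of V E w x y m]
            lhd1_comparable_if_adjacency_differs[of V E w x m y] by blast
        with step.IH show ?case by blast
      qed simp
    qed
    then show "(\<forall>m \<in> ?K. {x, m} \<in> E) \<or> (\<forall>m \<in> ?K. {x, m} \<notin> E)" by blast
  qed
qed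

lemma lhd1_comparable_if_prime:
  assumes "prime_graph V E" and "w \<in> V" "a \<in> V" "b \<in> V" "a \<noteq> b"
  shows "lhd1_comparable V E w a b"
proof (rule ccontr)
  assume incomparable: "\<not> lhd1_comparable V E w a b"
  let ?U = "lhd1_incomparability V E w"
  let ?K = "?U\<^sup>* `` {a}"
  have comparable_w: "lhd1_comparable V E w w v" if "v \<in> V" "v \<noteq> w" for v
    using lhd1_initial[OF that] unfolding lhd1_comparable_def by blast
  have "(a, b) \<in> ?U" using assms incomparable unfolding lhd1_incomparability_def by blast
  then have "a \<in> ?K" "b \<in> ?K" by auto
  moreover have "w \<notin> ?K"
  proof
    assume "w \<in> ?K"
    then have "(a, w) \<in> ?U\<^sup>*" by simp
    moreover have "a \<noteq> w" using comparable_w[of b] assms incomparable by blast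
    ultimately obtain y where "(y, w) \<in> ?U" by (metis rtranclE)
    then show False
      using comparable_w unfolding lhd1_incomparability_def lhd1_comparable_def by auto
  qed
  moreover have "?K = V \<or> (\<exists>x. ?K = {x})"
    using assms(1) is_module_lhd1_incomparability_component[OF assms(3)] unfolding prime_graph_def by blast
  ultimately show False using assms(2,5) by (metis singletonD)
qed

section \<open>Prime permutation graphs\<close>

lemma realizer_sym:
  assumes "realizer V E r1 r2"
  shows "realizer V E r2 r1"
proof -
  have "{u, v} \<in> E \<longleftrightarrow> ((u, v) \<in> r2 \<longleftrightarrow> (v, u) \<in> r1)" if "u \<in> V" "v \<in> V" "u \<noteq> v" for u v
  proof -
    have "{v, u} \<in> E \<longleftrightarrow> ((v, u) \<in> r1 \<longleftrightarrow> (u, v) \<in> r2)"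
      using assms that unfolding realizer_def by simp
    then show ?thesis by (auto simp: insert_commute)
  qed
  with assms show ?thesis unfolding realizer_def by simp
qed

lemma realizer_pair_in_r2:
  assumes "realizer V E r1 r2" and "(u, v) \<in> r1"
  shows "{u, v} \<in> E \<Longrightarrow> (v, u) \<in> r2" and "{u, v} \<notin> E \<Longrightarrow> (u, v) \<in> r2"
proof -
  have r1: "strict_lin_order V r1" and r2: "strict_lin_order V r2"
    using assms(1) unfolding realizer_def by blast+
  have uv: "u \<in> V" "v \<in> V" "u \<noteq> v"
    using r1 assms(2) unfolding strict_lin_order_def irrefl_def by auto
  with assms have edge: "{u, v} \<in> E \<longleftrightarrow> (v, u) \<in> r2"
    unfolding realizer_def by blast
  then show "{u, v} \<in> E \<Longrightarrow> (v, u) \<in> r2" by blast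
  show "(u, v) \<in> r2" if "{u, v} \<notin> E"
    using r2 uv edge that unfolding strict_lin_order_def total_on_def by blast
qed

lemma closed_under_E_realizer:
  assumes "realizer V E r1 r2"
  shows "closed_under_E E r1 r2"
  unfolding closed_under_E_iff
  using realizer_pair_in_r2[OF assms] realizer_pair_in_r2[OF realizer_sym[OF assms]] by blast

lemma lhd_subset_realizer:
  assumes "realizer V E r1 r2" and "\<forall>v \<in> V. v \<noteq> w \<longrightarrow> (w, v) \<in> r1"
  shows "lhd1 V E w \<subseteq> r1 \<and> lhd2 V E w \<subseteq> r2"
  using assms closed_under_E_realizer[OF assms(1)]
  by (intro lhd_least) (auto simp: realizer_def strict_lin_order_def)

lemma strict_lin_order_least:
  assumes "finite V" "V \<noteq> {}" "strict_lin_order V r"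
  obtains w where "w \<in> V" "\<forall>v \<in> V. v \<noteq> w \<longrightarrow> (w, v) \<in> r"
proof -
  have "finite r" using assms(1,3) finite_subset unfolding strict_lin_order_def by blast
  moreover have "acyclic r" using assms(3) unfolding strict_lin_order_def acyclic_def irrefl_def by simp
  ultimately have "wf r" by (rule finite_acyclic_wf)
  then obtain w where w: "w \<in> V" and minimal: "\<And>v. (v, w) \<in> r \<Longrightarrow> v \<notin> V"
    using assms(2) unfolding wf_eq_minimal by blast
  have "(w, v) \<in> r" if "v \<in> V" "v \<noteq> w" for v
    using assms(3) w minimal[of v] that unfolding strict_lin_order_def total_on_def by blast
  with w show thesis using that by blast
qed

lemma lhd1_subset:
  assumes "w \<in> V"
  shows "lhd1 V E w \<subseteq> V \<times> V"
proof -
  have "trans (V \<times> V)" unfolding trans_def by blast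
  moreover have "closed_under_E E (V \<times> V) (V \<times> V)" unfolding closed_under_E_iff by blast
  ultimately show ?thesis using lhd_least[of V w "V \<times> V"] assms by blast
qed

theorem strict_lin_order_lhd1:
  assumes "graph V E" "prime_graph V E" "permutation_graph V E"
  shows "\<exists>w \<in> V. strict_lin_order V (lhd1 V E w)"
proof -
  obtain r1 r2 where realizer: "realizer V E r1 r2"
    using assms(3) unfolding permutation_graph_def by blast
  then have r1: "strict_lin_order V r1" by (simp add: realizer_def)
  have "finite V" "V \<noteq> {}"
    using assms(1) unfolding graph_def by (meson)+
  then obtain w where w: "w \<in> V" "\<forall>v \<in> V. v \<noteq> w \<longrightarrow> (w, v) \<in> r1"
    using strict_lin_order_least[OF _ _ r1] by blast
  have "lhd1 V E w \<subseteq> r1"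
    using lhd_subset_realizer[OF realizer w(2)] by blast
  then have "irrefl (lhd1 V E w)"
    using r1 unfolding strict_lin_order_def irrefl_def by blast
  moreover have "total_on V (lhd1 V E w)"
    unfolding total_on_def using lhd1_comparable_if_prime[OF assms(2) w(1)]
    unfolding lhd1_comparable_def by simp
  ultimately have "strict_lin_order V (lhd1 V E w)"
    unfolding strict_lin_order_def using lhd1_subset[OF w(1), of E] trans_lhd1[of V E w] by simp
  with w(1) show ?thesis by blast
qed

lemma linear_order_on_strict_lin_order:
  "strict_lin_order V r \<Longrightarrow> linear_order_on V (r \<union> Id_on V)"
  unfolding strict_lin_order_def linear_order_on_def partial_order_on_def preorder_on_def
    refl_on_def total_on_def antisym_def trans_def irrefl_def
  by blast

section \<open>Definability in FP\<close>

definition ifp :: "('b set \<Rightarrow> 'b set) \<Rightarrow> 'b set" where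
  "ifp f = (\<Union>n. (f ^^ n) {})"

lemma ifp_subset:
  assumes "\<And>S. S \<subseteq> T \<Longrightarrow> f S \<subseteq> T"
  shows "ifp f \<subseteq> T"
proof -
  have "(f ^^ n) {} \<subseteq> T" for n
    by (induction n) (simp_all add: assms)
  then show ?thesis unfolding ifp_def by blast
qed

lemma ifp_rule:
  assumes inflationary: "\<And>S. S \<subseteq> f S" and "finite A" "A \<subseteq> ifp f"
    and rule: "\<And>S. A \<subseteq> S \<Longrightarrow> b \<in> f S"
  shows "b \<in> ifp f"
proof -
  have chain: "mono (\<lambda>n. (f ^^ n) {})"
    unfolding mono_iff_le_Suc using inflationary by simp
  have "\<exists>n. A \<subseteq> (f ^^ n) {}"
    using \<open>finite A\<close> \<open>A \<subseteq> ifp f\<close>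
  proof (induction A rule: finite_induct)
    case (insert a A)
    then obtain m n where "A \<subseteq> (f ^^ m) {}" "a \<in> (f ^^ n) {}"
      unfolding ifp_def by blast
    then have "insert a A \<subseteq> (f ^^ max m n) {}"
      using monoD[OF chain, of m "max m n"] monoD[OF chain, of n "max m n"] by auto
    then show ?case by blast
  qed simp
  then obtain n where "A \<subseteq> (f ^^ n) {}" by blast
  then have "b \<in> (f ^^ Suc n) {}" using rule by simp
  then show ?thesis unfolding ifp_def by blast
qed

definition FAnd :: "fp \<Rightarrow> fp \<Rightarrow> fp" where
  "FAnd \<phi> \<psi> = FNeg (FOr (FNeg \<phi>) (FNeg \<psi>))"

lemma sat_FAnd [simp]: "sat V E \<alpha> \<rho> (FAnd \<phi> \<psi>) \<longleftrightarrow> sat V E \<alpha> \<rho> \<phi> \<and> sat V E \<alpha> \<rho> \<psi>"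
  by (simp add: FAnd_def)

definition lhd_rule :: "'a set \<Rightarrow> 'a set set \<Rightarrow> 'a \<Rightarrow> 'a list set \<Rightarrow> 'a \<Rightarrow> 'a \<Rightarrow> 'a \<Rightarrow> bool" where
  "lhd_rule V E w S t x y \<longleftrightarrow>
     (\<exists>z \<in> V. [t, x, z] \<in> S \<and> [t, z, y] \<in> S) \<or>
     (if t = w
      then (x = w \<and> y \<noteq> w) \<or> (\<exists>s \<in> V - {w}. [s, y, x] \<in> S \<and> {x, y} \<in> E)
        \<or> (\<exists>s \<in> V - {w}. [s, x, y] \<in> S \<and> {x, y} \<notin> E)
      else ([w, y, x] \<in> S \<and> {x, y} \<in> E) \<or> ([w, x, y] \<in> S \<and> {x, y} \<notin> E))"

text \<open>Variable 0 holds w, variables 3, 4, 5 hold t, x, y, variable 6 is the bound witness, and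
  relation variable 0 is R.\<close>
definition lhd_step_formula :: fp where
  "lhd_step_formula =
     FOr (FEx 6 (FAnd (FRel 0 [3, 4, 6]) (FRel 0 [3, 6, 5])))
      (FOr (FAnd (FEq 3 0)
             (FOr (FAnd (FEq 4 0) (FNeg (FEq 5 0)))
               (FOr (FEx 6 (FAnd (FNeg (FEq 6 0)) (FAnd (FRel 0 [6, 5, 4]) (FEdge 4 5))))
                 (FEx 6 (FAnd (FNeg (FEq 6 0)) (FAnd (FRel 0 [6, 4, 5]) (FNeg (FEdge 4 5))))))))
        (FAnd (FNeg (FEq 3 0))
          (FOr (FAnd (FRel 0 [0, 5, 4]) (FEdge 4 5)) (FAnd (FRel 0 [0, 4, 5]) (FNeg (FEdge 4 5))))))"

definition lhd_formula :: fp where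
  "lhd_formula = FIFP 0 [3, 4, 5] lhd_step_formula [0, 1, 2]"

definition lhd_ifp_step :: "'a set \<Rightarrow> 'a set set \<Rightarrow> 'a \<Rightarrow> 'a list set \<Rightarrow> 'a list set" where
  "lhd_ifp_step V E w S =
     S \<union> {[t, x, y] | t x y. t \<in> V \<and> x \<in> V \<and> y \<in> V \<and> lhd_rule V E w S t x y}"

lemma sat_lhd_step_formula:
  "\<alpha> 0 = w \<Longrightarrow>
     sat V E (\<alpha>(5 := y, 4 := x, 3 := t)) (\<rho>(0 := S)) lhd_step_formula \<longleftrightarrow> lhd_rule V E w S t x y"
  unfolding lhd_step_formula_def lhd_rule_def by auto

lemma sat_lhd_formula:
  assumes "\<alpha> 0 = w"
  shows "sat V E \<alpha> \<rho> lhd_formula \<longleftrightarrow> [\<alpha> 0, \<alpha> 1, \<alpha> 2] \<in> ifp (lhd_ifp_step V E w)"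
proof -
  have "{as. length as = length [3::nat, 4, 5] \<and> set as \<subseteq> V \<and>
           sat V E (upds \<alpha> [3, 4, 5] as) (\<rho>(0 := S)) lhd_step_formula}
        = {[t, x, y] | t x y. t \<in> V \<and> x \<in> V \<and> y \<in> V \<and> lhd_rule V E w S t x y}" for S
    by (auto simp: length_Suc_conv sat_lhd_step_formula[of \<alpha> w, OF assms])
  then show ?thesis
    unfolding lhd_formula_def ifp_def lhd_ifp_step_def by simp
qed

definition lhd_triples :: "'a set \<Rightarrow> 'a set set \<Rightarrow> 'a \<Rightarrow> 'a list set" where
  "lhd_triples V E w =
     {[t, x, y] | t x y. t \<in> V \<and> x \<in> V \<and> y \<in> V \<and>
        (x, y) \<in> (if t = w then lhd1 V E w else lhd2 V E w)}"

lemma lhd_rule_sound: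
  assumes S: "S \<subseteq> lhd_triples V E w" and rule: "lhd_rule V E w S t x y" and "y \<in> V"
  shows "(x, y) \<in> (if t = w then lhd1 V E w else lhd2 V E w)"
proof -
  let ?L = "\<lambda>t. if t = w then lhd1 V E w else lhd2 V E w"
  note from2 = closed_under_ED[OF closed_under_E_sym[THEN iffD1, OF closed_under_E_lhd]]
    and from1 = closed_under_ED[OF closed_under_E_lhd]
  have S_L: "(a, b) \<in> ?L r" if "[r, a, b] \<in> S" for r a b
    using S that unfolding lhd_triples_def by auto
  show ?thesis
  proof (cases "\<exists>z. [t, x, z] \<in> S \<and> [t, z, y] \<in> S")
    case True
    have "trans (?L t)" by (simp add: trans_lhd1 trans_lhd2)
    moreover obtain z where "(x, z) \<in> ?L t" "(z, y) \<in> ?L t" using True S_L by blast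
    ultimately show ?thesis by (rule transD)
  next
    case False
    show ?thesis
    proof (cases "t = w")
      case True
      with False rule consider "x = w" "y \<noteq> w"
        | s where "[s, y, x] \<in> S" "s \<noteq> w" "{y, x} \<in> E"
        | s where "[s, x, y] \<in> S" "s \<noteq> w" "{x, y} \<notin> E"
        unfolding lhd_rule_def by (auto simp: insert_commute)
      then show ?thesis
      proof cases
        case 1
        then show ?thesis using True lhd1_initial[OF \<open>y \<in> V\<close>] by simp
      next
        case (2 s)
        then have "(y, x) \<in> lhd2 V E w" using S_L[of s y x] by simp
        then show ?thesis using True from2(1) 2 by simp
      next
        case (3 s)
        then have "(x, y) \<in> lhd2 V E w" using S_L[of s x y] by simp
        then show ?thesis using True from2(2) 3 by simp
      qed
    next
      case t: False
      with False rule consider "[w, y, x] \<in> S" "{y, x} \<in> E" | "[w, x, y] \<in> S" "{x, y} \<notin> E"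
        unfolding lhd_rule_def by (auto simp: insert_commute)
      then show ?thesis
      proof cases
        case 1
        then have "(y, x) \<in> lhd1 V E w" using S_L[of w y x] by simp
        then show ?thesis using t from1(1) 1 by simp
      next
        case 2
        then have "(x, y) \<in> lhd1 V E w" using S_L[of w x y] by simp
        then show ?thesis using t from1(2) 2 by simp
      qed
    qed
  qed
qed

lemma lhd_ifp_step_sound:
  assumes S: "S \<subseteq> lhd_triples V E w"
  shows "lhd_ifp_step V E w S \<subseteq> lhd_triples V E w"
proof
  fix a assume "a \<in> lhd_ifp_step V E w S"
  then consider "a \<in> S"
    | t x y where "a = [t, x, y]" "t \<in> V" "x \<in> V" "y \<in> V" "lhd_rule V E w S t x y"
    unfolding lhd_ifp_step_def by blast
  then show "a \<in> lhd_triples V E w"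
  proof cases
    case 1
    with S show ?thesis by blast
  next
    case (2 t x y)
    then show ?thesis using lhd_rule_sound[OF S, of t x y] unfolding lhd_triples_def by blast
  qed
qed

lemma ifp_lhd_ifp_step_subset: "ifp (lhd_ifp_step V E w) \<subseteq> lhd_triples V E w"
  by (rule ifp_subset) (rule lhd_ifp_step_sound)

lemma in_V_if_in_ifp_lhd_ifp_step:
  "[t, x, y] \<in> ifp (lhd_ifp_step V E w) \<Longrightarrow> t \<in> V \<and> x \<in> V \<and> y \<in> V"
  using subsetD[OF ifp_lhd_ifp_step_subset[of V E w]] unfolding lhd_triples_def by auto

lemma in_ifp_lhd_ifp_step_if_lhd_rule:
  assumes "t \<in> V" "x \<in> V" "y \<in> V" and "finite A" "A \<subseteq> ifp (lhd_ifp_step V E w)"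
    and rule: "\<And>S. A \<subseteq> S \<Longrightarrow> lhd_rule V E w S t x y"
  shows "[t, x, y] \<in> ifp (lhd_ifp_step V E w)"
proof (rule ifp_rule)
  show "S \<subseteq> lhd_ifp_step V E w S" for S unfolding lhd_ifp_step_def by blast
  show "[t, x, y] \<in> lhd_ifp_step V E w S" if "A \<subseteq> S" for S
    using rule[OF that] assms(1-3) unfolding lhd_ifp_step_def by blast
qed (use assms(4,5) in auto)

definition lhd1_ifp :: "'a set \<Rightarrow> 'a set set \<Rightarrow> 'a \<Rightarrow> 'a rel" where
  "lhd1_ifp V E w = {(x, y). [w, x, y] \<in> ifp (lhd_ifp_step V E w)}"

definition lhd2_ifp :: "'a set \<Rightarrow> 'a set set \<Rightarrow> 'a \<Rightarrow> 'a rel" where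
  "lhd2_ifp V E w = {(x, y). \<forall>t \<in> V - {w}. [t, x, y] \<in> ifp (lhd_ifp_step V E w)}"

lemma trans_lhd1_ifp: "trans (lhd1_ifp V E w)"
proof (rule transI)
  fix x y z assume "(x, y) \<in> lhd1_ifp V E w" "(y, z) \<in> lhd1_ifp V E w"
  then have xy: "[w, x, y] \<in> ifp (lhd_ifp_step V E w)" and yz: "[w, y, z] \<in> ifp (lhd_ifp_step V E w)"
    unfolding lhd1_ifp_def by auto
  have "[w, x, z] \<in> ifp (lhd_ifp_step V E w)"
    by (rule in_ifp_lhd_ifp_step_if_lhd_rule[of _ _ _ _ "{[w, x, y], [w, y, z]}"])
      (use in_V_if_in_ifp_lhd_ifp_step[OF xy] in_V_if_in_ifp_lhd_ifp_step[OF yz] xy yz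
        in \<open>auto simp: lhd_rule_def\<close>)
  then show "(x, z) \<in> lhd1_ifp V E w" unfolding lhd1_ifp_def by simp
qed

lemma trans_lhd2_ifp: "trans (lhd2_ifp V E w)"
proof (rule transI)
  fix x y z assume "(x, y) \<in> lhd2_ifp V E w" "(y, z) \<in> lhd2_ifp V E w"
  have "[t, x, z] \<in> ifp (lhd_ifp_step V E w)" if "t \<in> V - {w}" for t
  proof -
    have xy: "[t, x, y] \<in> ifp (lhd_ifp_step V E w)" and yz: "[t, y, z] \<in> ifp (lhd_ifp_step V E w)"
      using that \<open>(x, y) \<in> lhd2_ifp V E w\<close> \<open>(y, z) \<in> lhd2_ifp V E w\<close>
      unfolding lhd2_ifp_def by auto
    show ?thesis
      by (rule in_ifp_lhd_ifp_step_if_lhd_rule[of _ _ _ _ "{[t, x, y], [t, y, z]}"])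
        (use in_V_if_in_ifp_lhd_ifp_step[OF xy] in_V_if_in_ifp_lhd_ifp_step[OF yz] xy yz
          in \<open>auto simp: lhd_rule_def\<close>)
  qed
  then show "(x, z) \<in> lhd2_ifp V E w" unfolding lhd2_ifp_def by simp
qed

text \<open>The vertex t0 is needed because lhd2_ifp quantifies over V - {w}, vacuously if V = {w}.\<close>
lemma closed_under_E_lhd_ifp:
  assumes "w \<in> V" and t0: "t0 \<in> V - {w}"
  shows "closed_under_E E (lhd1_ifp V E w) (lhd2_ifp V E w)"
  unfolding closed_under_E_iff
proof (intro allI impI conjI)
  fix u v assume "(u, v) \<in> lhd2_ifp V E w"
  then have uv: "[t0, u, v] \<in> ifp (lhd_ifp_step V E w)" using t0 unfolding lhd2_ifp_def by blast
  note in_V = in_V_if_in_ifp_lhd_ifp_step[OF uv]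
  show "(v, u) \<in> lhd1_ifp V E w" if "{u, v} \<in> E"
    unfolding lhd1_ifp_def
    by (simp, rule in_ifp_lhd_ifp_step_if_lhd_rule[of _ _ _ _ "{[t0, u, v]}"])
      (use assms in_V uv that in \<open>auto simp: lhd_rule_def insert_commute\<close>)
  show "(u, v) \<in> lhd1_ifp V E w" if "{u, v} \<notin> E"
    unfolding lhd1_ifp_def
    by (simp, rule in_ifp_lhd_ifp_step_if_lhd_rule[of _ _ _ _ "{[t0, u, v]}"])
      (use assms in_V uv that in \<open>auto simp: lhd_rule_def\<close>)
next
  fix u v assume "(u, v) \<in> lhd1_ifp V E w"
  then have uv: "[w, u, v] \<in> ifp (lhd_ifp_step V E w)" unfolding lhd1_ifp_def by blast
  note in_V = in_V_if_in_ifp_lhd_ifp_step[OF uv]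
  show "(v, u) \<in> lhd2_ifp V E w" if "{u, v} \<in> E"
    unfolding lhd2_ifp_def
    by (simp, intro ballI in_ifp_lhd_ifp_step_if_lhd_rule[of _ _ _ _ "{[w, u, v]}"])
      (use in_V uv that in \<open>auto simp: lhd_rule_def insert_commute\<close>)
  show "(u, v) \<in> lhd2_ifp V E w" if "{u, v} \<notin> E"
    unfolding lhd2_ifp_def
    by (simp, intro ballI in_ifp_lhd_ifp_step_if_lhd_rule[of _ _ _ _ "{[w, u, v]}"])
      (use in_V uv that in \<open>auto simp: lhd_rule_def\<close>)
qed

lemma lhd_triples_subset_ifp:
  assumes "w \<in> V"
  shows "lhd_triples V E w \<subseteq> ifp (lhd_ifp_step V E w)"
proof (cases "V \<subseteq> {w}")
  case True
  then have "lhd1 V E w \<subseteq> {} \<and> lhd2 V E w \<subseteq> {}"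
    by (intro lhd_least) (auto simp: closed_under_E_iff)
  then show ?thesis unfolding lhd_triples_def by auto
next
  case False
  then obtain t0 where t0: "t0 \<in> V - {w}" by blast
  have "(w, v) \<in> lhd1_ifp V E w" if "v \<in> V" "v \<noteq> w" for v
    unfolding lhd1_ifp_def
    by (simp, rule in_ifp_lhd_ifp_step_if_lhd_rule[of _ _ _ _ "{}"])
      (auto simp: assms that lhd_rule_def)
  then have "lhd1 V E w \<subseteq> lhd1_ifp V E w \<and> lhd2 V E w \<subseteq> lhd2_ifp V E w"
    by (rule lhd_least[OF _ trans_lhd1_ifp trans_lhd2_ifp closed_under_E_lhd_ifp[OF assms t0]])
  then show ?thesis unfolding lhd_triples_def lhd1_ifp_def lhd2_ifp_def by auto
qed

lemma ifp_lhd_ifp_step: "w \<in> V \<Longrightarrow> ifp (lhd_ifp_step V E w) = lhd_triples V E w"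
  by (rule subset_antisym[OF ifp_lhd_ifp_step_subset lhd_triples_subset_ifp])

lemma sat_lhd_formula_iff:
  assumes "w \<in> V" "v \<in> V" "v' \<in> V" and "\<alpha> 0 = w" "\<alpha> 1 = v" "\<alpha> 2 = v'"
  shows "sat V E \<alpha> \<rho> lhd_formula \<longleftrightarrow> (v, v') \<in> lhd1 V E w"
  using assms by (simp add: sat_lhd_formula ifp_lhd_ifp_step lhd_triples_def)

lemma linear_order_on_if_defines_lhd1:
  assumes "graph V E" "prime_graph V E" "permutation_graph V E"
    and defining: "\<And>w v v'. w \<in> V \<Longrightarrow> v \<in> V \<Longrightarrow> v' \<in> V \<Longrightarrow>
      sat V E ((\<lambda>_. w)(1 := v, 2 := v')) (\<lambda>_. {}) \<phi> \<longleftrightarrow> (v, v') \<in> lhd1 V E w"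
  shows "\<exists>w \<in> V. linear_order_on V {(v, v') | v v'. v \<in> V \<and> v' \<in> V \<and>
           sat V E ((\<lambda>_. w)(1 := v, 2 := v')) (\<lambda>_. {}) (FOr \<phi> (FEq 1 2))}"
proof -
  obtain w where w: "w \<in> V" "strict_lin_order V (lhd1 V E w)"
    using strict_lin_order_lhd1[OF assms(1-3)] by blast
  have eq: "{(v, v') | v v'. v \<in> V \<and> v' \<in> V \<and>
           sat V E ((\<lambda>_. w)(1 := v, 2 := v')) (\<lambda>_. {}) (FOr \<phi> (FEq 1 2))}
        = lhd1 V E w \<union> Id_on V"
    using defining[OF w(1)] lhd1_subset[OF w(1)] by auto
  show ?thesis
    using w(1) linear_order_on_strict_lin_order[OF w(2)] unfolding eq[symmetric] by blast
qed

theorem corollary5p8: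
  shows "(\<exists>\<phi>1 :: fp. \<forall>(V :: nat set) E. graph V E \<and> prime_graph V E \<and> permutation_graph V E \<longrightarrow>
            (\<forall>w \<in> V. \<forall>v \<in> V. \<forall>v' \<in> V. \<forall>\<alpha> \<rho>. \<alpha> 0 = w \<and> \<alpha> 1 = v \<and> \<alpha> 2 = v' \<longrightarrow>
               (sat V E \<alpha> \<rho> \<phi>1 \<longleftrightarrow> (v, v') \<in> lhd1 V E w)))
       \<and> (\<forall>\<phi>1 :: fp.
            (\<forall>(V :: nat set) E. graph V E \<and> prime_graph V E \<and> permutation_graph V E \<longrightarrow>
              (\<forall>w \<in> V. \<forall>v \<in> V. \<forall>v' \<in> V. \<forall>\<alpha> \<rho>. \<alpha> 0 = w \<and> \<alpha> 1 = v \<and> \<alpha> 2 = v' \<longrightarrow>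
                 (sat V E \<alpha> \<rho> \<phi>1 \<longleftrightarrow> (v, v') \<in> lhd1 V E w)))
            \<longrightarrow> (\<forall>(V :: nat set) E. graph V E \<and> prime_graph V E \<and> permutation_graph V E \<longrightarrow>
                 (\<exists>w \<in> V. linear_order_on V
                    {(v, v') | v v'. v \<in> V \<and> v' \<in> V \<and>
                       sat V E ((\<lambda>_. w)(1 := v, 2 := v')) (\<lambda>_. {}) (FOr \<phi>1 (FEq 1 2))})))"
  apply (intro conjI allI impI)
  subgoal by (intro exI[of _ lhd_formula] allI impI ballI, elim conjE) (rule sat_lhd_formula_iff)
  subgoal by (rule linear_order_on_if_defines_lhd1) auto
  done

end
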